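(* Let $\{M_p\mid p\in P\}$ be a Morse decomposition of a multivector field on a finite simplicial complex $K$, with associated $P$-filtered chain complex $(C,d)$, let $(\bar C,\bar d)$ be a Conley complex of $(C,d)$, let $f:K\to\mathbb R$ be Lyapunov for the Morse decomposition, and let $P_f$ be an $f$-compatible order. Then $H(\bar{\mathbf C},P_f)\cong H(\mathbf C,P_f)\cong H(\mathbf F,P_f)$ as persistence modules.
   Context: $K$ is a finite simplicial complex; a multivector field $\mathcal V$ on $K$ is a partition of $K$ into convex sets $V$ (if $\sigma,\tau\in V$ and $\sigma\le\mu\le\tau$ in the face order then $\mu\in V$); $F_{\mathcal V}(\sigma)=[\sigma]_{\mathcal V}\cup\{\tau:\tau\le\sigma\}$ where $[\sigma]_{\mathcal V}$ is the part containing $\sigma$; a path is a sequence $\sigma_1,\dots,\sigma_r$ with $\sigma_k\in F_{\mathcal V}(\sigma_{k-1})$. A Morse decomposition indexed by a finite poset $(P,\le_P)$ is a partition $K=\bigsqcup_{p\in P}M_p$ such that every path from $M_p$ to $M_q$ has $q\le_P p$. Let $m=|P|$. $(C,d)$: $C_p$ is the $\mathbb Z_2$-span of the simplices in $M_p$ (graded by dimension), $C=\bigoplus_pC_p$ the simplicial chains of $K$ over $\mathbb Z_2$, $d$ the simplicial boundary. For $P$-graded spaces and a linear map $h$, $h_{pq}=\pi_p h\iota_q$, and $h$ is $P$-filtered if $h_{pq}\ne0\Rightarrow p\le_P q$. A $P$-filtered chain complex is a $\mathbb Z_2$ chain complex with a $P$-gradation (compatible with degree) whose differential is $P$-filtered.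 Filtered chain maps are $P$-filtered chain maps; filtered chain maps $\varphi,\psi$ are filtered chain homotopic if $\psi-\varphi=d'S+Sd$ for some $P$-filtered degree-raising-by-one linear $S$; two $P$-filtered complexes are filtered chain homotopic if there are filtered chain maps $\varphi,\varphi'$ between them with $\varphi'\varphi$ and $\varphi\varphi'$ filtered chain homotopic to the identities. A Conley complex of $(C,d)$ is a $P$-filtered chain complex $(\bar C,\bar d)$ filtered chain homotopic to $(C,d)$ with $\bar d_{pp}=0$ for all $p$. $f:K\to\mathbb R$ is Lyapunov if $f$ is constant on each $M_p$, with value $f(p)$, and $p\le_P q\Rightarrow f(p)\le f(q)$. An $f$-compatible order $P_f$ is an enumeration $p_1,\dots,p_m$ of $P$ that is a linear extension of $\le_P$ with $f(p_1)\le\dots\le f(p_m)$. For a $P$-filtered chain complex $(D,\delta)$, $\mathbf D_{p_i}=\bigoplus_{j\le i}D_{p_j}$ with restricted differential is a subcomplex, and $H(\mathbf D,P_f)$ is the persistence module $H_*(\mathbf D_{p_1})\to\dots\to H_*(\mathbf D_{p_m})$ with inclusion-induced maps. $K_i=\bigsqcup_{j\le i}M_{p_j}$ is a subcomplex of $K$, $C(K_i)$ its simplicial chain complex over $\mathbb Z_2$, and $H(\mathbf F,P_f)$ is the module $H_*(C(K_1))\to\dots\to H_*(C(K_m))$ with inclusion-induced maps. *)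

theory Defs
  imports Complex_Main
begin

definition simplicial_complex :: "'v set set \<Rightarrow> bool" where
  "simplicial_complex K \<longleftrightarrow> finite K \<and> (\<forall>\<sigma>\<in>K. finite \<sigma> \<and> \<sigma> \<noteq> {}) \<and>
     (\<forall>\<sigma>\<in>K. \<forall>\<tau>. \<tau> \<subseteq> \<sigma> \<and> \<tau> \<noteq> {} \<longrightarrow> \<tau> \<in> K)"

definition multivector_field :: "'v set set \<Rightarrow> 'v set set set \<Rightarrow> bool" where
  "multivector_field K V \<longleftrightarrow> (\<forall>A\<in>V. A \<noteq> {} \<and> A \<subseteq> K) \<and> \<Union>V = K \<and>
     (\<forall>A\<in>V. \<forall>B\<in>V. A \<noteq> B \<longrightarrow> A \<inter> B = {}) \<and>
     (\<forall>A\<in>V. \<forall>\<sigma>\<in>A. \<forall>\<tau>\<in>A. \<forall>\<mu>. \<sigma> \<subseteq> \<mu> \<and> \<mu> \<subseteq> \<tau> \<longrightarrow> \<mu> \<in> A)"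

definition Fv :: "'v set set \<Rightarrow> 'v set set set \<Rightarrow> 'v set \<Rightarrow> 'v set set" where
  "Fv K V \<sigma> = \<Union>{A\<in>V. \<sigma> \<in> A} \<union> {\<tau>\<in>K. \<tau> \<subseteq> \<sigma>}"

definition is_path :: "'v set set \<Rightarrow> 'v set set set \<Rightarrow> 'v set list \<Rightarrow> bool" where
  "is_path K V xs \<longleftrightarrow> xs \<noteq> [] \<and>
     (\<forall>k. 0 < k \<and> k < length xs \<longrightarrow> xs ! k \<in> Fv K V (xs ! (k - 1)))"

definition poset_on :: "'p set \<Rightarrow> ('p \<Rightarrow> 'p \<Rightarrow> bool) \<Rightarrow> bool" where
  "poset_on P le \<longleftrightarrow> (\<forall>p\<in>P. le p p) \<and> (\<forall>p\<in>P. \<forall>q\<in>P. le p q \<and> le q p \<longrightarrow> p = q) \<and>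
     (\<forall>p\<in>P. \<forall>q\<in>P. \<forall>r\<in>P. le p q \<and> le q r \<longrightarrow> le p r)"

definition morse_decomposition ::
  "'v set set \<Rightarrow> 'v set set set \<Rightarrow> 'p set \<Rightarrow> ('p \<Rightarrow> 'p \<Rightarrow> bool) \<Rightarrow> ('p \<Rightarrow> 'v set set) \<Rightarrow> bool" where
  "morse_decomposition K V P le M \<longleftrightarrow> finite P \<and> poset_on P le \<and>
     (\<forall>p\<in>P. M p \<noteq> {}) \<and> (\<forall>p\<in>P. \<forall>q\<in>P. p \<noteq> q \<longrightarrow> M p \<inter> M q = {}) \<and>
     \<Union>(M ` P) = K \<and>
     (\<forall>xs p q. p \<in> P \<and> q \<in> P \<and> is_path K V xs \<and> hd xs \<in> M p \<and> last xs \<in> M q \<longrightarrow> le q p)"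

definition morse_idx :: "'p set \<Rightarrow> ('p \<Rightarrow> 'v set set) \<Rightarrow> 'v set \<Rightarrow> 'p" where
  "morse_idx P M \<sigma> = (THE p. p \<in> P \<and> \<sigma> \<in> M p)"

text \<open>A graded Z2-vector space with a homogeneous basis; every element of the
  basis carries a degree and a P-index. Chains are finite subsets of the basis (Z2
  coefficients), addition is symmetric difference. A linear map is given by the images
  of basis elements; the differential is given by the boundary of basis elements.\<close>
record ('b, 'p) bcx =
  bas :: "'b set"
  deg :: "'b \<Rightarrow> int"
  idx :: "'b \<Rightarrow> 'p"
  bd  :: "'b \<Rightarrow> 'b set"

definition sdiff :: "'a set \<Rightarrow> 'a set \<Rightarrow> 'a set" where
  "sdiff A B = (A - B) \<union> (B - A)"

text \<open>Z2-linear extension of a map on basis elements to a (finite) chain.\<close>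
definition lin :: "('a \<Rightarrow> 'b set) \<Rightarrow> 'a set \<Rightarrow> 'b set" where
  "lin h c = {y. odd (card {x\<in>c. y \<in> h x})}"

definition pfcc :: "'p set \<Rightarrow> ('p \<Rightarrow> 'p \<Rightarrow> bool) \<Rightarrow> ('b, 'p) bcx \<Rightarrow> bool" where
  "pfcc P le C \<longleftrightarrow> (\<forall>x\<in>bas C. idx C x \<in> P \<and> finite (bd C x) \<and> bd C x \<subseteq> bas C \<and>
      (\<forall>y\<in>bd C x. deg C y = deg C x - 1 \<and> le (idx C y) (idx C x)) \<and>
      lin (bd C) (bd C x) = {})"

definition lmap :: "('a, 'p) bcx \<Rightarrow> ('b, 'p) bcx \<Rightarrow> int \<Rightarrow> ('a \<Rightarrow> 'b set) \<Rightarrow> bool" where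
  "lmap C D k h \<longleftrightarrow> (\<forall>x\<in>bas C. finite (h x) \<and> h x \<subseteq> bas D \<and> (\<forall>y\<in>h x. deg D y = deg C x + k))"

definition pfiltered :: "('p \<Rightarrow> 'p \<Rightarrow> bool) \<Rightarrow> ('a, 'p) bcx \<Rightarrow> ('b, 'p) bcx \<Rightarrow> ('a \<Rightarrow> 'b set) \<Rightarrow> bool" where
  "pfiltered le C D h \<longleftrightarrow> (\<forall>x\<in>bas C. \<forall>y\<in>h x. le (idx D y) (idx C x))"

definition fchain_map :: "('p \<Rightarrow> 'p \<Rightarrow> bool) \<Rightarrow> ('a, 'p) bcx \<Rightarrow> ('b, 'p) bcx \<Rightarrow> ('a \<Rightarrow> 'b set) \<Rightarrow> bool" where
  "fchain_map le C D h \<longleftrightarrow> lmap C D 0 h \<and> pfiltered le C D h \<and>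
     (\<forall>x\<in>bas C. lin (bd D) (h x) = lin h (bd C x))"

definition fhomotopic ::
  "('p \<Rightarrow> 'p \<Rightarrow> bool) \<Rightarrow> ('a, 'p) bcx \<Rightarrow> ('b, 'p) bcx \<Rightarrow> ('a \<Rightarrow> 'b set) \<Rightarrow> ('a \<Rightarrow> 'b set) \<Rightarrow> bool" where
  "fhomotopic le C D \<phi> \<psi> \<longleftrightarrow> (\<exists>S. lmap C D 1 S \<and> pfiltered le C D S \<and>
     (\<forall>x\<in>bas C. sdiff (\<psi> x) (\<phi> x) = sdiff (lin (bd D) (S x)) (lin S (bd C x))))"

definition fhtpy_equiv :: "('p \<Rightarrow> 'p \<Rightarrow> bool) \<Rightarrow> ('a, 'p) bcx \<Rightarrow> ('b, 'p) bcx \<Rightarrow> bool" where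
  "fhtpy_equiv le C D \<longleftrightarrow> (\<exists>\<phi> \<phi>'. fchain_map le C D \<phi> \<and> fchain_map le D C \<phi>' \<and>
     fhomotopic le C C (\<lambda>x. lin \<phi>' (\<phi> x)) (\<lambda>x. {x}) \<and>
     fhomotopic le D D (\<lambda>x. lin \<phi> (\<phi>' x)) (\<lambda>x. {x}))"

definition conley_complex :: "'p set \<Rightarrow> ('p \<Rightarrow> 'p \<Rightarrow> bool) \<Rightarrow> ('a, 'p) bcx \<Rightarrow> ('b, 'p) bcx \<Rightarrow> bool" where
  "conley_complex P le C Cb \<longleftrightarrow> pfcc P le Cb \<and> fhtpy_equiv le C Cb \<and>
     (\<forall>x\<in>bas Cb. \<forall>y\<in>bd Cb x. idx Cb y \<noteq> idx Cb x)"

definition simp_cx :: "'v set set \<Rightarrow> ('v set \<Rightarrow> 'p) \<Rightarrow> ('v set, 'p) bcx" where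
  "simp_cx L ix = \<lparr>bas = L, deg = (\<lambda>\<sigma>. int (card \<sigma>) - 1), idx = ix,
      bd = (\<lambda>\<sigma>. {\<sigma> - {v} | v. v \<in> \<sigma> \<and> 2 \<le> card \<sigma>})\<rparr>"

definition lyapunov :: "'p set \<Rightarrow> ('p \<Rightarrow> 'p \<Rightarrow> bool) \<Rightarrow> ('p \<Rightarrow> 'v set set) \<Rightarrow> ('v set \<Rightarrow> real) \<Rightarrow> ('p \<Rightarrow> real) \<Rightarrow> bool" where
  "lyapunov P le M f fP \<longleftrightarrow> (\<forall>p\<in>P. \<forall>\<sigma>\<in>M p. f \<sigma> = fP p) \<and>
     (\<forall>p\<in>P. \<forall>q\<in>P. le p q \<longrightarrow> fP p \<le> fP q)"

text \<open>f-compatible order p_1,...,p_m given as the list ps (0-indexed).\<close>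
definition f_compatible :: "'p set \<Rightarrow> ('p \<Rightarrow> 'p \<Rightarrow> bool) \<Rightarrow> ('p \<Rightarrow> real) \<Rightarrow> 'p list \<Rightarrow> bool" where
  "f_compatible P le fP ps \<longleftrightarrow> distinct ps \<and> set ps = P \<and>
     (\<forall>i<length ps. \<forall>j<length ps. le (ps ! i) (ps ! j) \<longrightarrow> i \<le> j) \<and>
     (\<forall>i j. i \<le> j \<and> j < length ps \<longrightarrow> fP (ps ! i) \<le> fP (ps ! j))"

definition cycles :: "('b, 'p) bcx \<Rightarrow> int \<Rightarrow> 'b set set" where
  "cycles C n = {c. finite c \<and> c \<subseteq> bas C \<and> (\<forall>x\<in>c. deg C x = n) \<and> lin (bd C) c = {}}"

definition boundaries :: "('b, 'p) bcx \<Rightarrow> int \<Rightarrow> 'b set set" where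
  "boundaries C n = {lin (bd C) c | c. finite c \<and> c \<subseteq> bas C \<and> (\<forall>x\<in>c. deg C x = n + 1)}"

definition homology :: "('b, 'p) bcx \<Rightarrow> int \<Rightarrow> 'b set set set" where
  "homology C n = (\<lambda>z. (\<lambda>b. sdiff z b) ` boundaries C n) ` cycles C n"

definition hadd :: "'b set set \<Rightarrow> 'b set set \<Rightarrow> 'b set set" where
  "hadd X Y = {sdiff x y | x y. x \<in> X \<and> y \<in> Y}"

text \<open>Map induced by inclusion into the complex D: a class is sent to the class of its
  representatives in D.\<close>
definition hincl :: "('b, 'p) bcx \<Rightarrow> int \<Rightarrow> 'b set set \<Rightarrow> 'b set set" where
  "hincl D n X = {sdiff z b | z b. z \<in> X \<and> b \<in> boundaries D n}"

text \<open>Isomorphism (in degree n) of the persistence modules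
  H_n(C 0) -> ... -> H_n(C (m-1)) and H_n(D 0) -> ... -> H_n(D (m-1))
  with inclusion-induced maps: a family of Z2-linear (= additive) bijections commuting
  with the structure maps.\<close>
definition hpm_iso :: "nat \<Rightarrow> int \<Rightarrow> (nat \<Rightarrow> ('a, 'p) bcx) \<Rightarrow> (nat \<Rightarrow> ('b, 'q) bcx) \<Rightarrow> bool" where
  "hpm_iso m n C D \<longleftrightarrow> (\<exists>\<phi>.
     (\<forall>i<m. bij_betw (\<phi> i) (homology (C i) n) (homology (D i) n) \<and>
        (\<forall>X\<in>homology (C i) n. \<forall>Y\<in>homology (C i) n. \<phi> i (hadd X Y) = hadd (\<phi> i X) (\<phi> i Y))) \<and>
     (\<forall>i. Suc i < m \<longrightarrow> (\<forall>X\<in>homology (C i) n.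
        \<phi> (Suc i) (hincl (C (Suc i)) n X) = hincl (D (Suc i)) n (\<phi> i X))))"

text \<open>The subcomplex D_{p_{i+1}} = sum of D_{p_j}, j \<le> i (0-indexed).\<close>
definition sub_cx :: "('b, 'p) bcx \<Rightarrow> 'p list \<Rightarrow> nat \<Rightarrow> ('b, 'p) bcx" where
  "sub_cx C ps i = C\<lparr>bas := {x\<in>bas C. idx C x \<in> set (take (Suc i) ps)}\<rparr>"

text \<open>K_{i+1} = union of M_{p_j}, j \<le> i (0-indexed).\<close>
definition Kpre :: "('p \<Rightarrow> 'v set set) \<Rightarrow> 'p list \<Rightarrow> nat \<Rightarrow> 'v set set" where
  "Kpre M ps i = \<Union>(M ` set (take (Suc i) ps))"

end

theory Submission
  imports Defs
begin

(* A filtered map never raises the P-index, so a filtered chain homotopy equivalence between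
  (C, d) and its Conley complex restricts, together with its homotopies, to the subcomplexes
  spanned by any down-closed set of indices. Prefixes of a linear extension of the order are
  down-closed, so one and the same pair of maps is a chain homotopy equivalence at every level
  of the filtration; the induced isomorphisms on homology therefore commute with the maps
  induced by inclusion. The second isomorphism is an identity: the level spanned by the first
  i Morse sets is literally the simplicial chain complex of K_i. *)

lemma in_sdiff_iff: "y \<in> sdiff A B \<longleftrightarrow> (y \<in> A) \<noteq> (y \<in> B)"
  by (auto simp: sdiff_def)

lemma sdiff_empty_simps [simp]: "sdiff A {} = A" "sdiff {} A = A" "sdiff A A = {}"
  by (auto simp: sdiff_def)

lemma sdiff_commute: "sdiff A B = sdiff B A"
  by (auto simp: sdiff_def)

lemma sdiff_sdiff_cancel_left: "sdiff (sdiff A B) A = B"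
  by (auto simp: sdiff_def)

lemma finite_sdiff: "finite A \<Longrightarrow> finite B \<Longrightarrow> finite (sdiff A B)"
  by (auto simp: sdiff_def)

lemma odd_card_sdiff_iff:
  assumes "finite A" "finite B"
  shows "odd (card (sdiff A B)) \<longleftrightarrow> odd (card A) \<noteq> odd (card B)"
proof -
  have "card A = card (A - B) + card (A \<inter> B)" "card B = card (B - A) + card (A \<inter> B)"
    using assms by (metis Int_Diff_disjoint Un_Diff_Int card_Un_disjoint finite_Diff finite_Int
        inf_commute)+
  moreover have "card (sdiff A B) = card (A - B) + card (B - A)"
    unfolding sdiff_def using assms by (intro card_Un_disjoint) auto
  ultimately show ?thesis
    by auto
qed

lemma lin_empty [simp]: "lin h {} = {}"
  by (simp add: lin_def)

lemma lin_singleton [simp]: "lin h {x} = h x"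
proof -
  have "{x'\<in>{x}. y \<in> h x'} = (if y \<in> h x then {x} else {})" for y
    by auto
  then show ?thesis
    by (auto simp: lin_def)
qed

lemma lin_cong: "(\<And>x. x \<in> c \<Longrightarrow> g x = h x) \<Longrightarrow> lin g c = lin h c"
  unfolding lin_def by (metis (mono_tags, lifting) Collect_cong)

lemma lin_subset_UN: "lin h c \<subseteq> \<Union>(h ` c)"
proof
  fix y assume "y \<in> lin h c"
  then have "odd (card {x\<in>c. y \<in> h x})"
    by (simp add: lin_def)
  then have "{x\<in>c. y \<in> h x} \<noteq> {}"
    by (metis card.empty even_zero)
  then show "y \<in> \<Union>(h ` c)"
    by auto
qed

lemma finite_lin: "finite c \<Longrightarrow> (\<And>x. x \<in> c \<Longrightarrow> finite (h x)) \<Longrightarrow> finite (lin h c)"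
  by (meson finite_UN_I finite_subset lin_subset_UN)

lemma lin_sdiff: "finite a \<Longrightarrow> finite b \<Longrightarrow> lin h (sdiff a b) = sdiff (lin h a) (lin h b)"
proof -
  assume "finite a" "finite b"
  moreover have "{x\<in>sdiff a b. y \<in> h x} = sdiff {x\<in>a. y \<in> h x} {x\<in>b. y \<in> h x}" for y
    by (auto simp: sdiff_def)
  ultimately show ?thesis
    by (auto simp: lin_def in_sdiff_iff odd_card_sdiff_iff)
qed

lemma lin_fun_sdiff: "finite c \<Longrightarrow> lin (\<lambda>x. sdiff (g x) (h x)) c = sdiff (lin g c) (lin h c)"
proof -
  assume "finite c"
  moreover have "{x\<in>c. y \<in> sdiff (g x) (h x)} = sdiff {x\<in>c. y \<in> g x} {x\<in>c. y \<in> h x}" for y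
    by (auto simp: sdiff_def)
  ultimately show ?thesis
    by (auto simp: lin_def in_sdiff_iff odd_card_sdiff_iff)
qed

lemma lin_insert: "finite c \<Longrightarrow> x \<notin> c \<Longrightarrow> lin h (insert x c) = sdiff (h x) (lin h c)"
  using lin_sdiff[of "{x}" c h] by (simp add: sdiff_def insert_Diff_if)

lemma lin_lin:
  "finite c \<Longrightarrow> (\<And>x. x \<in> c \<Longrightarrow> finite (g x)) \<Longrightarrow> lin h (lin g c) = lin (\<lambda>x. lin h (g x)) c"
proof (induction c rule: finite_induct)
  case (insert x c)
  have "finite (lin g c)"
    using insert by (intro finite_lin) auto
  with insert show ?case
    by (simp add: lin_insert lin_sdiff)
qed simp

lemma lin_id: "finite c \<Longrightarrow> lin (\<lambda>x. {x}) c = c"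
  by (induction c rule: finite_induct) (auto simp: lin_insert sdiff_def)

definition finite_bd :: "('b, 'p) bcx \<Rightarrow> bool" where
  "finite_bd C \<longleftrightarrow> (\<forall>x\<in>bas C. finite (bd C x))"

lemma lmap_lin:
  assumes "lmap C D k h" "finite c" "c \<subseteq> bas C" "\<forall>x\<in>c. deg C x = n"
  shows "finite (lin h c) \<and> lin h c \<subseteq> bas D \<and> (\<forall>y\<in>lin h c. deg D y = n + k)"
proof -
  have "finite (lin h c)"
    using assms by (intro finite_lin) (auto simp: lmap_def)
  then show ?thesis
    using assms lin_subset_UN[of h c] by (fastforce simp: lmap_def)
qed

lemma fchain_map_lin_bd:
  assumes "fchain_map le C D \<phi>" "finite_bd C" "finite c" "c \<subseteq> bas C"
  shows "lin (bd D) (lin \<phi> c) = lin \<phi> (lin (bd C) c)"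
proof -
  have "lin (bd D) (lin \<phi> c) = lin (\<lambda>x. lin (bd D) (\<phi> x)) c"
    using assms by (intro lin_lin) (auto simp: fchain_map_def lmap_def)
  also have "\<dots> = lin (\<lambda>x. lin \<phi> (bd C x)) c"
    using assms by (intro lin_cong) (auto simp: fchain_map_def)
  also have "\<dots> = lin \<phi> (lin (bd C) c)"
    using assms by (intro lin_lin[symmetric]) (auto simp: finite_bd_def)
  finally show ?thesis .
qed

lemma empty_in_boundaries: "{} \<in> boundaries C n"
  unfolding boundaries_def by (rule CollectI, rule exI[of _ "{}"]) simp

lemma sdiff_in_boundaries:
  assumes "a \<in> boundaries C n" "b \<in> boundaries C n"
  shows "sdiff a b \<in> boundaries C n"
proof -
  obtain c c' where c: "a = lin (bd C) c" "finite c" "c \<subseteq> bas C" "\<forall>x\<in>c. deg C x = n + 1"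
    and c': "b = lin (bd C) c'" "finite c'" "c' \<subseteq> bas C" "\<forall>x\<in>c'. deg C x = n + 1"
    using assms unfolding boundaries_def by blast
  then have "sdiff a b = lin (bd C) (sdiff c c')"
    by (simp add: lin_sdiff)
  moreover have "finite (sdiff c c')" "sdiff c c' \<subseteq> bas C" "\<forall>x\<in>sdiff c c'. deg C x = n + 1"
    using c c' by (auto simp: sdiff_def)
  ultimately show ?thesis
    unfolding boundaries_def by blast
qed

lemma finite_boundary: "finite_bd C \<Longrightarrow> b \<in> boundaries C n \<Longrightarrow> finite b"
  unfolding boundaries_def finite_bd_def by (auto intro!: finite_lin)

definition hclass :: "('b, 'p) bcx \<Rightarrow> int \<Rightarrow> 'b set \<Rightarrow> 'b set set" where
  "hclass C n z = (\<lambda>b. sdiff z b) ` boundaries C n"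

lemma homology_eq_hclass_image: "homology C n = hclass C n ` cycles C n"
  by (simp add: homology_def hclass_def)

lemma hclass_eqI:
  assumes "sdiff z w \<in> boundaries C n"
  shows "hclass C n z = hclass C n w"
proof -
  have shift: "sdiff z b = sdiff w (sdiff (sdiff z w) b)" "sdiff w b = sdiff z (sdiff (sdiff z w) b)"
    for b by (auto simp: sdiff_def)
  show ?thesis
    unfolding hclass_def
  proof (intro equalityI subsetI)
    fix y assume "y \<in> (\<lambda>b. sdiff z b) ` boundaries C n"
    then obtain b where "b \<in> boundaries C n" "y = sdiff z b"
      by auto
    then show "y \<in> (\<lambda>b. sdiff w b) ` boundaries C n"
      using shift(1) assms sdiff_in_boundaries by blast
  next
    fix y assume "y \<in> (\<lambda>b. sdiff w b) ` boundaries C n"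
    then obtain b where "b \<in> boundaries C n" "y = sdiff w b"
      by auto
    then show "y \<in> (\<lambda>b. sdiff z b) ` boundaries C n"
      using shift(2) assms sdiff_in_boundaries by blast
  qed
qed

lemma hadd_hclass: "hadd (hclass C n z) (hclass C n w) = hclass C n (sdiff z w)"
proof (intro equalityI subsetI)
  fix y assume "y \<in> hadd (hclass C n z) (hclass C n w)"
  then obtain b b' where "b \<in> boundaries C n" "b' \<in> boundaries C n"
    and "y = sdiff (sdiff z b) (sdiff w b')"
    by (auto simp: hadd_def hclass_def)
  moreover have "sdiff (sdiff z b) (sdiff w b') = sdiff (sdiff z w) (sdiff b b')"
    by (auto simp: sdiff_def)
  ultimately show "y \<in> hclass C n (sdiff z w)"
    unfolding hclass_def using sdiff_in_boundaries by blast
next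
  fix y assume "y \<in> hclass C n (sdiff z w)"
  then obtain b where "b \<in> boundaries C n" "y = sdiff (sdiff z w) b"
    by (auto simp: hclass_def)
  moreover have "sdiff (sdiff z w) b = sdiff (sdiff z b) (sdiff w {})"
    by (auto simp: sdiff_def)
  ultimately show "y \<in> hadd (hclass C n z) (hclass C n w)"
    unfolding hadd_def hclass_def using empty_in_boundaries by blast
qed

lemma sdiff_image_hclass:
  assumes "\<And>b. b \<in> boundaries C n \<Longrightarrow> sdiff (g (sdiff z b)) (g z) \<in> boundaries D n"
  shows "{sdiff (g x) b | x b. x \<in> hclass C n z \<and> b \<in> boundaries D n} = hclass D n (g z)"
proof (intro equalityI subsetI)
  fix y assume "y \<in> {sdiff (g x) b | x b. x \<in> hclass C n z \<and> b \<in> boundaries D n}"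
  then obtain b1 b where y: "y = sdiff (g (sdiff z b1)) b" "b1 \<in> boundaries C n" "b \<in> boundaries D n"
    by (auto simp: hclass_def)
  let ?e = "sdiff (g (sdiff z b1)) (g z)"
  have "sdiff ?e b \<in> boundaries D n"
    using sdiff_in_boundaries[OF assms[OF y(2)] y(3)] .
  moreover have "y = sdiff (g z) (sdiff ?e b)"
    using y by (auto simp: sdiff_def)
  ultimately show "y \<in> hclass D n (g z)"
    by (auto simp: hclass_def)
next
  fix y assume "y \<in> hclass D n (g z)"
  then obtain b where "y = sdiff (g z) b" "b \<in> boundaries D n"
    by (auto simp: hclass_def)
  moreover have "z \<in> hclass C n z"
    using empty_in_boundaries by (force simp: hclass_def)
  ultimately show "y \<in> {sdiff (g x) b | x b. x \<in> hclass C n z \<and> b \<in> boundaries D n}"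
    by blast
qed

lemma hincl_hclass:
  "boundaries C n \<subseteq> boundaries D n \<Longrightarrow> hincl D n (hclass C n z) = hclass D n z"
  unfolding hincl_def using sdiff_image_hclass[of C n "\<lambda>x. x" z D]
  by (simp add: sdiff_sdiff_cancel_left subset_iff)

definition hmap :: "('b, 'p) bcx \<Rightarrow> int \<Rightarrow> ('a \<Rightarrow> 'b set) \<Rightarrow> 'a set set \<Rightarrow> 'b set set" where
  "hmap D n \<phi> X = {sdiff (lin \<phi> x) b | x b. x \<in> X \<and> b \<in> boundaries D n}"

lemma fchain_map_cycles:
  assumes "fchain_map le C D \<phi>" "finite_bd C" "z \<in> cycles C n"
  shows "lin \<phi> z \<in> cycles D n"
proof -
  have z: "finite z" "z \<subseteq> bas C" "\<forall>x\<in>z. deg C x = n" "lin (bd C) z = {}"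
    using assms by (auto simp: cycles_def)
  then have "finite (lin \<phi> z) \<and> lin \<phi> z \<subseteq> bas D \<and> (\<forall>y\<in>lin \<phi> z. deg D y = n + 0)"
    using assms by (intro lmap_lin) (auto simp: fchain_map_def)
  moreover have "lin (bd D) (lin \<phi> z) = {}"
    using z assms fchain_map_lin_bd by fastforce
  ultimately show ?thesis
    by (simp add: cycles_def)
qed

lemma fchain_map_boundaries:
  assumes "fchain_map le C D \<phi>" "finite_bd C" "b \<in> boundaries C n"
  shows "lin \<phi> b \<in> boundaries D n"
proof -
  obtain c where c: "b = lin (bd C) c" "finite c" "c \<subseteq> bas C" "\<forall>x\<in>c. deg C x = n + 1"
    using assms unfolding boundaries_def by blast
  then have "finite (lin \<phi> c) \<and> lin \<phi> c \<subseteq> bas D \<and> (\<forall>y\<in>lin \<phi> c. deg D y = n + 1 + 0)"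
    using assms by (intro lmap_lin) (auto simp: fchain_map_def)
  moreover have "lin \<phi> b = lin (bd D) (lin \<phi> c)"
    using c assms fchain_map_lin_bd by fastforce
  ultimately show ?thesis
    unfolding boundaries_def by auto
qed

lemma hmap_hclass:
  assumes "fchain_map le C D \<phi>" "finite_bd C" "finite z"
  shows "hmap D n \<phi> (hclass C n z) = hclass D n (lin \<phi> z)"
  unfolding hmap_def
proof (rule sdiff_image_hclass)
  fix b assume b: "b \<in> boundaries C n"
  have "finite b"
    using assms(2) b by (rule finite_boundary)
  then have "sdiff (lin \<phi> (sdiff z b)) (lin \<phi> z) = lin \<phi> b"
    using assms(3) by (simp add: lin_sdiff sdiff_sdiff_cancel_left)
  then show "sdiff (lin \<phi> (sdiff z b)) (lin \<phi> z) \<in> boundaries D n"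
    using assms b fchain_map_boundaries by metis
qed

lemma hmap_homology:
  assumes "fchain_map le C D \<phi>" "finite_bd C" "X \<in> homology C n"
  shows "hmap D n \<phi> X \<in> homology D n"
  using assms hmap_hclass fchain_map_cycles
  by (fastforce simp: homology_eq_hclass_image cycles_def)

lemma hmap_hadd:
  assumes "fchain_map le C D \<phi>" "finite_bd C" "X \<in> homology C n" "Y \<in> homology C n"
  shows "hmap D n \<phi> (hadd X Y) = hadd (hmap D n \<phi> X) (hmap D n \<phi> Y)"
proof -
  obtain z w where "z \<in> cycles C n" "w \<in> cycles C n" and X: "X = hclass C n z"
    and Y: "Y = hclass C n w"
    using assms by (auto simp: homology_eq_hclass_image)
  then have "finite z" "finite w"
    by (auto simp: cycles_def)
  then show ?thesis
    using assms by (simp add: X Y hadd_hclass hmap_hclass finite_sdiff lin_sdiff)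
qed

lemma hmap_hincl:
  assumes "fchain_map le C D \<phi>" "finite_bd C" "fchain_map le C' D' \<phi>" "finite_bd C'"
    and "boundaries C n \<subseteq> boundaries C' n" "boundaries D n \<subseteq> boundaries D' n"
    and "X \<in> homology C n"
  shows "hmap D' n \<phi> (hincl C' n X) = hincl D' n (hmap D n \<phi> X)"
proof -
  obtain z where "z \<in> cycles C n" and X: "X = hclass C n z"
    using assms by (auto simp: homology_eq_hclass_image)
  then have "finite z"
    by (simp add: cycles_def)
  then show ?thesis
    using assms by (simp add: X hincl_hclass hmap_hclass)
qed

lemma fhomotopic_id_cycle:
  assumes "fhomotopic le C C g (\<lambda>x. {x})" "finite_bd C" "z \<in> cycles C n"
  shows "sdiff (lin g z) z \<in> boundaries C n"
proof -
  obtain S where S: "lmap C C 1 S"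
    and htpy: "\<forall>x\<in>bas C. sdiff {x} (g x) = sdiff (lin (bd C) (S x)) (lin S (bd C x))"
    using assms(1) unfolding fhomotopic_def by blast
  have z: "finite z" "z \<subseteq> bas C" "\<forall>x\<in>z. deg C x = n" "lin (bd C) z = {}"
    using assms(3) by (auto simp: cycles_def)
  have "sdiff z (lin g z) = lin (\<lambda>x. sdiff {x} (g x)) z"
    using z by (simp add: lin_fun_sdiff lin_id)
  also have "\<dots> = lin (\<lambda>x. sdiff (lin (bd C) (S x)) (lin S (bd C x))) z"
    using z htpy by (intro lin_cong) auto
  also have "\<dots> = sdiff (lin (\<lambda>x. lin (bd C) (S x)) z) (lin (\<lambda>x. lin S (bd C x)) z)"
    using z by (simp add: lin_fun_sdiff)
  also have "\<dots> = sdiff (lin (bd C) (lin S z)) (lin S (lin (bd C) z))"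
    using z S assms(2) by (subst (1 2) lin_lin) (auto simp: lmap_def finite_bd_def)
  also have "\<dots> = lin (bd C) (lin S z)"
    using z by simp
  finally have "sdiff z (lin g z) = lin (bd C) (lin S z)" .
  moreover have "finite (lin S z) \<and> lin S z \<subseteq> bas C \<and> (\<forall>y\<in>lin S z. deg C y = n + 1)"
    using z S by (intro lmap_lin) auto
  ultimately show ?thesis
    unfolding boundaries_def by (auto simp: sdiff_commute)
qed

definition fchain_equiv ::
  "('p \<Rightarrow> 'p \<Rightarrow> bool) \<Rightarrow> ('a, 'p) bcx \<Rightarrow> ('b, 'p) bcx \<Rightarrow> ('a \<Rightarrow> 'b set) \<Rightarrow> ('b \<Rightarrow> 'a set) \<Rightarrow> bool"
  where
  "fchain_equiv le C D \<phi> \<psi> \<longleftrightarrow> fchain_map le C D \<phi> \<and> fchain_map le D C \<psi> \<and>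
     fhomotopic le C C (\<lambda>x. lin \<psi> (\<phi> x)) (\<lambda>x. {x}) \<and>
     fhomotopic le D D (\<lambda>x. lin \<phi> (\<psi> x)) (\<lambda>x. {x})"

lemma fhtpy_equiv_iff: "fhtpy_equiv le C D \<longleftrightarrow> (\<exists>\<phi> \<psi>. fchain_equiv le C D \<phi> \<psi>)"
  by (simp add: fhtpy_equiv_def fchain_equiv_def)

lemma fchain_equiv_sym: "fchain_equiv le C D \<phi> \<psi> \<Longrightarrow> fchain_equiv le D C \<psi> \<phi>"
  by (simp add: fchain_equiv_def)

lemma hmap_inverse:
  assumes "fchain_equiv le C D \<phi> \<psi>" "finite_bd C" "finite_bd D" "X \<in> homology C n"
  shows "hmap C n \<psi> (hmap D n \<phi> X) = X"
proof -
  have \<phi>: "fchain_map le C D \<phi>" and \<psi>: "fchain_map le D C \<psi>"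
    and htpy: "fhomotopic le C C (\<lambda>x. lin \<psi> (\<phi> x)) (\<lambda>x. {x})"
    using assms(1) by (simp_all add: fchain_equiv_def)
  obtain z where z: "z \<in> cycles C n" and X: "X = hclass C n z"
    using assms(4) by (auto simp: homology_eq_hclass_image)
  have "lin \<phi> z \<in> cycles D n"
    using \<phi> assms(2) z by (rule fchain_map_cycles)
  then have "hmap C n \<psi> (hmap D n \<phi> X) = hclass C n (lin \<psi> (lin \<phi> z))"
    using \<phi> \<psi> assms(2,3) z by (simp add: X hmap_hclass cycles_def)
  also have "lin \<psi> (lin \<phi> z) = lin (\<lambda>x. lin \<psi> (\<phi> x)) z"
    using \<phi> z by (intro lin_lin) (auto simp: cycles_def fchain_map_def lmap_def)
  also have "hclass C n \<dots> = X"
    using fhomotopic_id_cycle[OF htpy assms(2) z] by (simp add: X hclass_eqI)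
  finally show ?thesis .
qed

lemma bij_betw_hmap:
  assumes "fchain_equiv le C D \<phi> \<psi>" "finite_bd C" "finite_bd D"
  shows "bij_betw (hmap D n \<phi>) (homology C n) (homology D n)"
proof (rule bij_betw_byWitness[where f'="hmap C n \<psi>"])
  have "fchain_map le C D \<phi>" "fchain_map le D C \<psi>"
    using assms(1) by (simp_all add: fchain_equiv_def)
  then show "hmap D n \<phi> ` homology C n \<subseteq> homology D n"
    "hmap C n \<psi> ` homology D n \<subseteq> homology C n"
    using assms(2,3) hmap_homology by blast+
qed (use assms hmap_inverse fchain_equiv_sym in blast)+

lemma hpm_iso_fchain_equiv:
  assumes equiv: "\<And>i. i < m \<Longrightarrow> fchain_equiv le (C i) (D i) \<phi> \<psi>"
    and fin: "\<And>i. i < m \<Longrightarrow> finite_bd (C i) \<and> finite_bd (D i)"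
    and mono: "\<And>i. Suc i < m \<Longrightarrow>
      boundaries (C i) n \<subseteq> boundaries (C (Suc i)) n \<and> boundaries (D i) n \<subseteq> boundaries (D (Suc i)) n"
  shows "hpm_iso m n C D"
  unfolding hpm_iso_def
proof (intro exI[of _ "\<lambda>i. hmap (D i) n \<phi>"] conjI allI impI ballI)
  have \<phi>: "fchain_map le (C i) (D i) \<phi>" if "i < m" for i
    using equiv[OF that] by (simp add: fchain_equiv_def)
  fix i
  show "bij_betw (hmap (D i) n \<phi>) (homology (C i) n) (homology (D i) n)" if "i < m"
    using bij_betw_hmap equiv fin that by blast
  show "hmap (D i) n \<phi> (hadd X Y) = hadd (hmap (D i) n \<phi> X) (hmap (D i) n \<phi> Y)"
    if "i < m" "X \<in> homology (C i) n" "Y \<in> homology (C i) n" for X Y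
    using hmap_hadd \<phi> fin that by blast
  show "hmap (D (Suc i)) n \<phi> (hincl (C (Suc i)) n X) = hincl (D (Suc i)) n (hmap (D i) n \<phi> X)"
    if "Suc i < m" "X \<in> homology (C i) n" for X
    using hmap_hincl[OF \<phi> _ \<phi>] fin mono that by (meson Suc_lessD)
qed

definition down_closed :: "'p set \<Rightarrow> ('p \<Rightarrow> 'p \<Rightarrow> bool) \<Rightarrow> 'p set \<Rightarrow> bool" where
  "down_closed P le Q \<longleftrightarrow> (\<forall>p\<in>Q. \<forall>q\<in>P. le q p \<longrightarrow> q \<in> Q)"

definition restrict_cx :: "('b, 'p) bcx \<Rightarrow> 'p set \<Rightarrow> ('b, 'p) bcx" where
  "restrict_cx C Q = C\<lparr>bas := {x\<in>bas C. idx C x \<in> Q}\<rparr>"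

lemma restrict_cx_simps [simp]:
  "bas (restrict_cx C Q) = {x\<in>bas C. idx C x \<in> Q}" "deg (restrict_cx C Q) = deg C"
  "idx (restrict_cx C Q) = idx C" "bd (restrict_cx C Q) = bd C"
  by (simp_all add: restrict_cx_def)

lemma sub_cx_eq_restrict_cx: "sub_cx C ps i = restrict_cx C (set (take (Suc i) ps))"
  by (simp add: sub_cx_def restrict_cx_def)

lemma f_compatible_down_closed_take:
  assumes "f_compatible P le fP ps"
  shows "down_closed P le (set (take k ps))"
  unfolding down_closed_def
proof (intro ballI impI)
  fix p q assume "p \<in> set (take k ps)" "q \<in> P" "le q p"
  moreover obtain j where j: "j < k" "j < length ps" "p = ps ! j"
    using \<open>p \<in> set (take k ps)\<close> by (auto simp: in_set_conv_nth)
  moreover obtain l where l: "l < length ps" "q = ps ! l"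
    using \<open>q \<in> P\<close> assms by (auto simp: f_compatible_def in_set_conv_nth)
  ultimately have "l \<le> j"
    using assms by (auto simp: f_compatible_def)
  then show "q \<in> set (take k ps)"
    using j l by (auto simp: in_set_conv_nth intro!: exI[of _ l])
qed

lemma lmap_restrict_cx:
  assumes "lmap C D k h" "pfiltered le C D h" "idx D ` bas D \<subseteq> P" "down_closed P le Q"
  shows "lmap (restrict_cx C Q) (restrict_cx D Q) k h"
  using assms unfolding lmap_def pfiltered_def down_closed_def by fastforce

lemma pfiltered_restrict_cx:
  "pfiltered le C D h \<Longrightarrow> pfiltered le (restrict_cx C Q) (restrict_cx D Q) h"
  by (simp add: pfiltered_def)

lemma fchain_map_restrict_cx:
  assumes "fchain_map le C D \<phi>" "idx D ` bas D \<subseteq> P" "down_closed P le Q"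
  shows "fchain_map le (restrict_cx C Q) (restrict_cx D Q) \<phi>"
proof -
  have "lmap C D 0 \<phi>" "pfiltered le C D \<phi>"
    using assms(1) by (simp_all add: fchain_map_def)
  then show ?thesis
    using assms lmap_restrict_cx[of C D 0 \<phi> le P Q]
    by (simp add: fchain_map_def pfiltered_restrict_cx)
qed

lemma fhomotopic_restrict_cx:
  assumes "fhomotopic le C D \<phi> \<psi>" "idx D ` bas D \<subseteq> P" "down_closed P le Q"
  shows "fhomotopic le (restrict_cx C Q) (restrict_cx D Q) \<phi> \<psi>"
proof -
  obtain S where "lmap C D 1 S" "pfiltered le C D S"
    "\<forall>x\<in>bas C. sdiff (\<psi> x) (\<phi> x) = sdiff (lin (bd D) (S x)) (lin S (bd C x))"
    using assms(1) unfolding fhomotopic_def by blast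
  then show ?thesis
    unfolding fhomotopic_def using assms(2,3) lmap_restrict_cx pfiltered_restrict_cx
    by (intro exI[of _ S]) auto
qed

lemma fchain_equiv_restrict_cx:
  "fchain_equiv le C D \<phi> \<psi> \<Longrightarrow> idx C ` bas C \<subseteq> P \<Longrightarrow> idx D ` bas D \<subseteq> P \<Longrightarrow>
    down_closed P le Q \<Longrightarrow> fchain_equiv le (restrict_cx C Q) (restrict_cx D Q) \<phi> \<psi>"
  unfolding fchain_equiv_def by (auto intro: fchain_map_restrict_cx fhomotopic_restrict_cx)

lemma finite_bd_restrict_cx: "finite_bd C \<Longrightarrow> finite_bd (restrict_cx C Q)"
  by (simp add: finite_bd_def)

lemma boundaries_restrict_cx_mono:
  "Q \<subseteq> Q' \<Longrightarrow> boundaries (restrict_cx C Q) n \<subseteq> boundaries (restrict_cx C Q') n"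
  unfolding boundaries_def by auto

lemma hpm_iso_same_chains:
  assumes "\<And>i. i < m \<Longrightarrow> bas (C i) = bas (D i) \<and> deg (C i) = deg (D i) \<and> bd (C i) = bd (D i)"
  shows "hpm_iso m n C D"
proof -
  have "homology (C i) n = homology (D i) n \<and> (\<forall>X. hincl (C i) n X = hincl (D i) n X)"
    if "i < m" for i
    using assms[OF that] by (simp add: homology_def cycles_def boundaries_def hincl_def)
  then show ?thesis
    unfolding hpm_iso_def by (intro exI[of _ "\<lambda>i X. X"]) (auto simp: bij_betw_def dest: Suc_lessD)
qed

lemma finite_bd_simp_cx:
  fixes L :: "'v set set"
  shows "finite_bd (simp_cx L ix)"
  unfolding finite_bd_def
proof
  fix \<sigma> :: "'v set"
  have "{\<sigma> - {v} | v. v \<in> \<sigma> \<and> 2 \<le> card \<sigma>} \<subseteq> (\<lambda>v. \<sigma> - {v}) ` {v\<in>\<sigma>. 2 \<le> card \<sigma>}"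
    by auto
  \<comment> \<open>An infinite \<sigma> has card \<sigma> = 0 and hence no faces.\<close>
  moreover have "finite {v\<in>\<sigma>. 2 \<le> card \<sigma>}"
    using card.infinite by (cases "finite \<sigma>") auto
  ultimately show "finite (bd (simp_cx L ix) \<sigma>)"
    by (auto simp: simp_cx_def intro: finite_surj)
qed

lemma morse_idx_eq:
  assumes "morse_decomposition K V P le M" "p \<in> P" "\<sigma> \<in> M p"
  shows "morse_idx P M \<sigma> = p"
  unfolding morse_idx_def
proof (rule the_equality)
  show "\<And>q. q \<in> P \<and> \<sigma> \<in> M q \<Longrightarrow> q = p"
    using assms unfolding morse_decomposition_def by blast
qed (use assms in blast)

lemma morse_idx_mem:
  assumes "morse_decomposition K V P le M" "\<sigma> \<in> K"
  shows "morse_idx P M \<sigma> \<in> P \<and> \<sigma> \<in> M (morse_idx P M \<sigma>)"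
proof -
  obtain p where "p \<in> P" "\<sigma> \<in> M p"
    using assms unfolding morse_decomposition_def by blast
  then show ?thesis
    using assms(1) morse_idx_eq by metis
qed

lemma morse_idx_preimage:
  assumes "morse_decomposition K V P le M" "Q \<subseteq> P"
  shows "{\<sigma>\<in>K. morse_idx P M \<sigma> \<in> Q} = \<Union>(M ` Q)"
proof -
  have "\<Union>(M ` P) = K"
    using assms(1) by (simp add: morse_decomposition_def)
  then show ?thesis
    using assms morse_idx_eq morse_idx_mem by fastforce
qed

theorem proposition12:
  fixes K :: "'v set set" and V :: "'v set set set" and P :: "'p set"
    and le :: "'p \<Rightarrow> 'p \<Rightarrow> bool" and M :: "'p \<Rightarrow> 'v set set"
    and Cb :: "('b, 'p) bcx" and f :: "'v set \<Rightarrow> real" and fP :: "'p \<Rightarrow> real"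
    and ps :: "'p list"
  assumes "simplicial_complex K"
    and "multivector_field K V"
    and "morse_decomposition K V P le M"
    and "conley_complex P le (simp_cx K (morse_idx P M)) Cb"
    and "lyapunov P le M f fP"
    and "f_compatible P le fP ps"
  shows "\<forall>n::int.
      hpm_iso (length ps) n (\<lambda>i. sub_cx Cb ps i) (\<lambda>i. sub_cx (simp_cx K (morse_idx P M)) ps i)
    \<and> hpm_iso (length ps) n (\<lambda>i. sub_cx (simp_cx K (morse_idx P M)) ps i)
                           (\<lambda>i. simp_cx (Kpre M ps i) (\<lambda>_. ()))"
proof
  fix n :: int
  let ?SK = "simp_cx K (morse_idx P M)"
  have "pfcc P le Cb" "fhtpy_equiv le ?SK Cb"
    using assms(4) by (simp_all add: conley_complex_def)
  then obtain \<phi> \<psi> where equiv: "fchain_equiv le Cb ?SK \<psi> \<phi>"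
    by (auto simp: fhtpy_equiv_iff dest: fchain_equiv_sym)
  have "finite_bd Cb" "idx Cb ` bas Cb \<subseteq> P"
    using \<open>pfcc P le Cb\<close> by (auto simp: pfcc_def finite_bd_def)
  moreover have "idx ?SK ` bas ?SK \<subseteq> P"
    using morse_idx_mem[OF assms(3)] by (auto simp: simp_cx_def)
  moreover have prefix: "down_closed P le (set (take (Suc i) ps))" "set (take (Suc i) ps) \<subseteq> P" for i
    using assms(6) f_compatible_down_closed_take by (auto simp: f_compatible_def dest: in_set_takeD)
  moreover have "set (take (Suc i) ps) \<subseteq> set (take (Suc (Suc i)) ps)" for i
    by (simp add: set_take_subset_set_take)
  ultimately have "hpm_iso (length ps) n (\<lambda>i. sub_cx Cb ps i) (\<lambda>i. sub_cx ?SK ps i)" (is ?Conley)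
    unfolding sub_cx_eq_restrict_cx
    by (intro hpm_iso_fchain_equiv[OF fchain_equiv_restrict_cx[OF equiv]])
      (simp_all add: finite_bd_restrict_cx finite_bd_simp_cx boundaries_restrict_cx_mono)
  moreover have "hpm_iso (length ps) n (\<lambda>i. sub_cx ?SK ps i) (\<lambda>i. simp_cx (Kpre M ps i) (\<lambda>_. ()))"
    (is ?simplicial)
    using morse_idx_preimage[OF assms(3) prefix(2)]
    by (intro hpm_iso_same_chains) (simp add: Kpre_def sub_cx_def simp_cx_def)
  ultimately show "?Conley \<and> ?simplicial" ..
qed

end
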